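(* Let $\mathbb{K}$ be a field and $f=a_0(x)+a_1(x)y+\cdots+a_n(x)y^n\in\mathbb{K}[x,y]$ with $n\geq 2$, $a_0,\ldots,a_n\in\mathbb{K}[x]$, $a_0a_n\neq 0$. Assume that $f$ has no nonconstant factor in $\mathbb{K}[x]$. If there exists an index $j$ with $1\leq j\leq n-1$ such that $$\deg a_j>\max_{i<j}\{\deg a_i+(j-i)\deg a_n\}\quad\text{and}\quad \deg a_j>\max_{i>j}\{\deg a_i+(i-j)\deg a_0\},$$ then $f$ is a product of at most $\min\{j,n-j\}$ irreducible polynomials over $\mathbb{K}[x]$. In particular, if $j=1$ or $j=n-1$, then $f$ is irreducible over $\mathbb{K}[x]$.
   Context: Indices $i$ range over $\{0,1,\ldots,n\}$. $f$ is regarded as a polynomial in $y$ with coefficients in $\mathbb{K}[x]$; "a product of at most $k$ irreducible polynomials over $\mathbb{K}[x]$" means that in the factorization of $f$ into irreducible elements of $\mathbb{K}[x][y]$ the number of factors, counted with multiplicities, is at most $k$. *)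

theory Defs
  imports "HOL-Computational_Algebra.Polynomial_Factorial"
begin

end

theory Submission
  imports Defs
begin

text \<open>
  Give the term \<open>a\<^sub>i(x) y\<^sup>i\<close> of \<open>f \<in> K[x][y]\<close> the weight \<open>deg a\<^sub>i + w i\<close>. Among the terms of
  maximal weight, the largest exponent of \<open>y\<close> (the top index) is additive under multiplication,
  because the parts of maximal weight multiply without cancellation. For \<open>w = deg a\<^sub>0\<close>, every
  factor of \<open>f\<close> of positive \<open>y\<close>-degree has top index at least 1, since its leading term
  weighs at least as much as its constant term; so the number of irreducible factors is at most
  the top index of \<open>f\<close>. The same applies to the reversed polynomial \<open>y\<^sup>n f(x, 1/y)\<close> with
  \<open>w = deg a\<^sub>n\<close>. The hypotheses make \<open>a\<^sub>j y\<^sup>j\<close> the unique term of maximal weight in both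
  cases, so there are at most \<open>j\<close> and at most \<open>n - j\<close> factors.
\<close>

lemma prod_list_irreducibles_exists_additive:
  fixes x :: "'a::algebraic_semidom" and \<mu> :: "'a \<Rightarrow> nat"
  assumes additive: "\<And>a b. a \<noteq> 0 \<Longrightarrow> b \<noteq> 0 \<Longrightarrow> \<mu> (a * b) = \<mu> a + \<mu> b"
    and pos: "\<And>a. a \<noteq> 0 \<Longrightarrow> \<not> is_unit a \<Longrightarrow> 0 < \<mu> a"
  shows "x \<noteq> 0 \<Longrightarrow> \<not> is_unit x \<Longrightarrow> \<exists>fs. x = prod_list fs \<and> (\<forall>g\<in>set fs. irreducible g)"
proof (induction "\<mu> x" arbitrary: x rule: less_induct)
  case less
  show ?case
  proof (cases "irreducible x")
    case True
    then show ?thesis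
      by (intro exI[of _ "[x]"]) simp
  next
    case False
    then obtain a b where ab: "x = a * b" "\<not> is_unit a" "\<not> is_unit b"
      using less.prems unfolding irreducible_def by blast
    then have "a \<noteq> 0" "b \<noteq> 0"
      using less.prems by auto
    then have "\<mu> a < \<mu> x" "\<mu> b < \<mu> x"
      using ab additive pos by auto
    then obtain as bs where "a = prod_list as" "\<forall>g\<in>set as. irreducible g"
        "b = prod_list bs" "\<forall>g\<in>set bs. irreducible g"
      using less.hyps \<open>a \<noteq> 0\<close> \<open>b \<noteq> 0\<close> ab by meson
    then show ?thesis
      using ab by (intro exI[of _ "as @ bs"]) auto
  qed
qed

lemma prod_list_irreducibles_exists_poly_poly:
  fixes f :: "'a::field poly poly"
  assumes "f \<noteq> 0" "\<not> is_unit f"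
  shows "\<exists>fs. f = prod_list fs \<and> (\<forall>g\<in>set fs. irreducible g)"
proof (rule prod_list_irreducibles_exists_additive[OF _ _ assms])
  show "degree (a * b) + degree (lead_coeff (a * b))
      = (degree a + degree (lead_coeff a)) + (degree b + degree (lead_coeff b))"
    if "a \<noteq> 0" "b \<noteq> 0" for a b :: "'a poly poly"
    using that lead_coeff_mult[of a b] by (simp add: degree_mult_eq del: lead_coeff_mult)
  show "0 < degree a + degree (lead_coeff a)" if "a \<noteq> 0" "\<not> is_unit a" for a :: "'a poly poly"
  proof (rule ccontr)
    assume "\<not> 0 < degree a + degree (lead_coeff a)"
    then obtain c where "a = [:[:c:]:]"
      by (metis add_is_0 degree_eq_zeroE lead_coeff_pCons(2) not_gr0 pCons_0_0)
    then show False
      using that by (auto simp: is_unit_poly_iff dvd_field_iff)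
  qed
qed

lemma degree_sum_le_nonzero_summand:
  "finite S \<Longrightarrow> sum f S \<noteq> 0 \<Longrightarrow> \<exists>i\<in>S. f i \<noteq> 0 \<and> degree (sum f S) \<le> degree (f i)"
proof (induction S rule: finite_induct)
  case empty
  then show ?case by simp
next
  case (insert x S)
  have sum_eq: "sum f (insert x S) = f x + sum f S"
    using insert.hyps by simp
  show ?case
  proof (cases "sum f S = 0 \<or> (f x \<noteq> 0 \<and> degree (sum f S) \<le> degree (f x))")
    case True
    then show ?thesis
      using insert.prems sum_eq degree_add_le_max[of "f x" "sum f S"] by auto
  next
    case False
    then obtain i where "i \<in> S" "f i \<noteq> 0" "degree (sum f S) \<le> degree (f i)"
      using insert.IH by blast
    moreover have "degree (f x) \<le> degree (sum f S)"
      using False by (cases "f x = 0") auto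
    ultimately show ?thesis
      using sum_eq degree_add_le_max[of "f x" "sum f S"] by auto
  qed
qed

definition weighted_deg :: "nat \<Rightarrow> 'a::zero poly poly \<Rightarrow> nat \<Rightarrow> nat" where
  "weighted_deg w g i = degree (coeff g i) + w * i"

definition is_top_index :: "nat \<Rightarrow> 'a::zero poly poly \<Rightarrow> nat \<Rightarrow> bool" where
  "is_top_index w g P \<longleftrightarrow> coeff g P \<noteq> 0
     \<and> (\<forall>k. coeff g k \<noteq> 0 \<longrightarrow> weighted_deg w g k \<le> weighted_deg w g P)
     \<and> (\<forall>k>P. coeff g k \<noteq> 0 \<longrightarrow> weighted_deg w g k < weighted_deg w g P)"

lemma weighted_deg_coeff_mult_le:
  fixes g h :: "'a::idom poly poly"
  assumes G: "is_top_index w g P" and H: "is_top_index w h Q"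
    and nz: "coeff g i \<noteq> 0" "coeff h l \<noteq> 0"
  shows "degree (coeff g i * coeff h l) + w * (i + l) \<le> weighted_deg w g P + weighted_deg w h Q"
    and "P < i \<or> Q < l \<Longrightarrow>
      degree (coeff g i * coeff h l) + w * (i + l) < weighted_deg w g P + weighted_deg w h Q"
proof -
  have "degree (coeff g i * coeff h l) + w * (i + l) = weighted_deg w g i + weighted_deg w h l"
    using nz by (simp add: degree_mult_eq weighted_deg_def algebra_simps)
  moreover have "weighted_deg w g i \<le> weighted_deg w g P"
      "P < i \<Longrightarrow> weighted_deg w g i < weighted_deg w g P"
      "weighted_deg w h l \<le> weighted_deg w h Q"
      "Q < l \<Longrightarrow> weighted_deg w h l < weighted_deg w h Q"
    using G H nz unfolding is_top_index_def by auto
  ultimately show "degree (coeff g i * coeff h l) + w * (i + l)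
      \<le> weighted_deg w g P + weighted_deg w h Q"
    "P < i \<or> Q < l \<Longrightarrow>
      degree (coeff g i * coeff h l) + w * (i + l) < weighted_deg w g P + weighted_deg w h Q"
    by linarith+
qed

lemma is_top_index_mult:
  fixes g h :: "'a::idom poly poly"
  assumes G: "is_top_index w g P" and H: "is_top_index w h Q"
  shows "is_top_index w (g * h) (P + Q)"
proof -
  define M where "M = weighted_deg w g P + weighted_deg w h Q"
  define t where "t k i = coeff g i * coeff h (k - i)" for k i
  have coeff_gh: "coeff (g * h) k = (\<Sum>i\<le>k. t k i)" for k
    by (simp add: coeff_mult t_def)
  have term_bound: "degree (t k i) + w * k \<le> M"
    "P < i \<or> Q < k - i \<Longrightarrow> degree (t k i) + w * k < M"
    if "i \<le> k" "t k i \<noteq> 0" for k i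
    using weighted_deg_coeff_mult_le[OF G H, of i "k - i"] that by (auto simp: t_def M_def)
  have bound: "weighted_deg w (g * h) k \<le> M"
    "P + Q < k \<Longrightarrow> weighted_deg w (g * h) k < M"
    if nz: "coeff (g * h) k \<noteq> 0" for k
  proof -
    obtain i where i: "i \<le> k" "t k i \<noteq> 0" "degree (coeff (g * h) k) \<le> degree (t k i)"
      using degree_sum_le_nonzero_summand[of "{..k}" "t k"] nz by (auto simp: coeff_gh)
    then show "weighted_deg w (g * h) k \<le> M"
      using term_bound(1)[OF i(1,2)] by (simp add: weighted_deg_def)
    assume "P + Q < k"
    then have "P < i \<or> Q < k - i"
      by linarith
    then show "weighted_deg w (g * h) k < M"
      using term_bound(2)[OF i(1,2)] i(3) by (simp add: weighted_deg_def)
  qed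
  define e where "e = degree (t (P + Q) P)"
  have tP: "t (P + Q) P \<noteq> 0" "e + w * (P + Q) = M"
    using G H by (auto simp: is_top_index_def t_def e_def weighted_deg_def M_def degree_mult_eq
        algebra_simps)
  have "coeff (t (P + Q) i) e = 0" if "i \<le> P + Q" "i \<noteq> P" for i
  proof (cases "t (P + Q) i = 0")
    case False
    then have "degree (t (P + Q) i) < e"
      using term_bound(2)[OF that(1) False] that tP(2) by linarith
    then show ?thesis by (rule coeff_eq_0)
  qed simp
  then have "coeff (coeff (g * h) (P + Q)) e = coeff (t (P + Q) P) e"
    by (simp add: coeff_gh coeff_sum sum.remove[of _ P])
  also have "\<dots> \<noteq> 0"
    using tP(1) by (simp add: e_def)
  finally have top_nz: "coeff (g * h) (P + Q) \<noteq> 0" and "e \<le> degree (coeff (g * h) (P + Q))"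
    by (auto intro: le_degree)
  then have "weighted_deg w (g * h) (P + Q) = M"
    using bound(1)[OF top_nz] tP(2) unfolding weighted_deg_def by linarith
  with top_nz bound show ?thesis
    unfolding is_top_index_def by auto
qed

lemma is_top_index_exists:
  fixes g :: "'a::zero poly poly"
  assumes "g \<noteq> 0"
  shows "\<exists>P. is_top_index w g P"
proof -
  define S where "S = {k. coeff g k \<noteq> 0}"
  have "finite S"
    unfolding S_def by (rule finite_subset[of _ "{..degree g}"]) (auto intro: le_degree)
  moreover have "degree g \<in> S"
    using assms by (simp add: S_def)
  ultimately have M: "finite (weighted_deg w g ` S)" "weighted_deg w g ` S \<noteq> {}"
    by auto
  define M where "M = Max (weighted_deg w g ` S)"
  define T where "T = {k\<in>S. weighted_deg w g k = M}"
  have "finite T" "T \<noteq> {}"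
    using \<open>finite S\<close> Max_in[OF M] by (auto simp: T_def M_def)
  then have "Max T \<in> T" "\<And>k. k \<in> T \<Longrightarrow> k \<le> Max T"
    by auto
  moreover have "\<And>k. k \<in> S \<Longrightarrow> weighted_deg w g k \<le> M"
    using M by (simp add: M_def)
  ultimately have "is_top_index w g (Max T)"
    unfolding is_top_index_def by (fastforce simp: T_def S_def)
  then show ?thesis ..
qed

lemma is_top_index_unique: "is_top_index w g P \<Longrightarrow> is_top_index w g P' \<Longrightarrow> P = P'"
  unfolding is_top_index_def by (metis leD nat_neq_iff)

definition top_index :: "nat \<Rightarrow> 'a::zero poly poly \<Rightarrow> nat" where
  "top_index w g = (THE P. is_top_index w g P)"

lemma top_index_eqI: "is_top_index w g P \<Longrightarrow> top_index w g = P"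
  unfolding top_index_def by (blast intro: the_equality is_top_index_unique)

lemma is_top_index_top_index: "g \<noteq> 0 \<Longrightarrow> is_top_index w g (top_index w g)"
  using is_top_index_exists top_index_eqI by metis

lemma top_index_mult:
  fixes g h :: "'a::idom poly poly"
  assumes "g \<noteq> 0" "h \<noteq> 0"
  shows "top_index w (g * h) = top_index w g + top_index w h"
  using assms by (intro top_index_eqI is_top_index_mult is_top_index_top_index)

lemma top_index_pos:
  fixes g :: "'a::zero poly poly"
  assumes "0 < degree g" "degree (coeff g 0) \<le> w"
  shows "0 < top_index w g"
proof (rule ccontr)
  assume "\<not> 0 < top_index w g"
  then have "is_top_index w g 0"
    using assms(1) is_top_index_top_index[of g w] by fastforce
  moreover have "lead_coeff g \<noteq> 0"
    using assms(1) by auto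
  ultimately have "weighted_deg w g (degree g) < weighted_deg w g 0"
    using assms(1) unfolding is_top_index_def by blast
  moreover have "w \<le> w * degree g"
    using assms(1) by simp
  ultimately show False
    using assms(2) by (simp add: weighted_deg_def)
qed

lemma length_le_top_index_prod_list:
  fixes fs :: "'a::idom poly poly list"
  assumes "\<forall>g\<in>set fs. 0 < degree g \<and> degree (coeff g 0) \<le> w"
  shows "length fs \<le> top_index w (prod_list fs)"
  using assms
proof (induction fs)
  case Nil
  then show ?case by simp
next
  case (Cons g fs)
  have "g \<noteq> 0" "prod_list fs \<noteq> 0"
    using Cons.prems by (auto simp: prod_list_zero_iff)
  then show ?case
    using Cons top_index_pos[of g w] by (simp add: top_index_mult)
qed

lemma length_le_top_index_reflect_prod_list:
  fixes fs :: "'a::idom poly poly list"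
  assumes "\<forall>g\<in>set fs. 0 < degree g \<and> coeff g 0 \<noteq> 0 \<and> degree (lead_coeff g) \<le> w"
  shows "length fs \<le> top_index w (reflect_poly (prod_list fs))"
  using length_le_top_index_prod_list[of "map reflect_poly fs" w] assms
  by (simp add: reflect_poly_prod_list)

lemma top_index_eqI_dominant:
  fixes f :: "'a::zero poly poly"
  assumes "coeff f j \<noteq> 0"
    and "\<And>i. i < j \<Longrightarrow> coeff f i \<noteq> 0 \<Longrightarrow> degree (coeff f i) < degree (coeff f j)"
    and "\<And>i. j < i \<Longrightarrow> coeff f i \<noteq> 0 \<Longrightarrow> degree (coeff f i) + (i - j) * w < degree (coeff f j)"
  shows "top_index w f = j"
proof (rule top_index_eqI)
  have "weighted_deg w f i < weighted_deg w f j" if "i \<noteq> j" "coeff f i \<noteq> 0" for i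
  proof (cases "i < j")
    case True
    then show ?thesis
      using assms(2)[OF True that(2)] by (simp add: weighted_deg_def add_less_le_mono)
  next
    case False
    then obtain d where "i = j + d"
      using le_Suc_ex not_less by blast
    then show ?thesis
      using assms(3)[of i] that by (simp add: weighted_deg_def algebra_simps)
  qed
  then show "is_top_index w f j"
    using assms(1) unfolding is_top_index_def by (metis order.order_iff_strict less_not_refl)
qed

lemma top_index_reflect_poly_eqI_dominant:
  fixes f :: "'a::zero poly poly"
  assumes "coeff f j \<noteq> 0"
    and "\<And>i. i < j \<Longrightarrow> coeff f i \<noteq> 0 \<Longrightarrow> degree (coeff f i) + (j - i) * w < degree (coeff f j)"
    and "\<And>i. j < i \<Longrightarrow> coeff f i \<noteq> 0 \<Longrightarrow> degree (coeff f i) < degree (coeff f j)"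
  shows "top_index w (reflect_poly f) = degree f - j"
proof (rule top_index_eqI_dominant)
  have "j \<le> degree f"
    using assms(1) by (rule le_degree)
  have coeff_rf: "coeff (reflect_poly f) i = coeff f (degree f - i)" if "i \<le> degree f" for i
    using that by (simp add: coeff_reflect_poly)
  have rf_nz: "i \<le> degree f" if "coeff (reflect_poly f) i \<noteq> 0" for i
    using that by (auto simp: coeff_reflect_poly split: if_splits)
  show "coeff (reflect_poly f) (degree f - j) \<noteq> 0"
    using assms(1) \<open>j \<le> degree f\<close> by (simp add: coeff_rf)
  show "degree (coeff (reflect_poly f) i) < degree (coeff (reflect_poly f) (degree f - j))"
    if "i < degree f - j" "coeff (reflect_poly f) i \<noteq> 0" for i
    using that assms(3)[of "degree f - i"] \<open>j \<le> degree f\<close> by (simp add: coeff_rf)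
  show "degree (coeff (reflect_poly f) i) + (i - (degree f - j)) * w
      < degree (coeff (reflect_poly f) (degree f - j))"
    if "degree f - j < i" "coeff (reflect_poly f) i \<noteq> 0" for i
  proof -
    have "i \<le> degree f"
      using rf_nz that(2) .
    then show ?thesis
      using that assms(2)[of "degree f - i"] \<open>j \<le> degree f\<close> by (simp add: coeff_rf ac_simps)
  qed
qed

lemma dvd_imp_coeff_0_dvd: "g dvd f \<Longrightarrow> coeff g 0 dvd coeff f 0"
  by (auto simp: coeff_mult_0)

lemma dvd_imp_lead_coeff_dvd:
  fixes f g :: "'a::idom poly"
  shows "g dvd f \<Longrightarrow> lead_coeff g dvd lead_coeff f"
  by (auto simp: lead_coeff_mult)

lemma degree_pos_of_irreducible_dvd:
  fixes f g :: "'a::field poly poly"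
  assumes "irreducible g" "g dvd f" "\<And>c. [:c:] dvd f \<Longrightarrow> degree c = 0"
  shows "0 < degree g"
proof (rule ccontr)
  assume "\<not> 0 < degree g"
  then obtain c where c: "g = [:c:]"
    by (metis degree_eq_zeroE not_gr0)
  then have "degree c = 0" "c \<noteq> 0"
    using assms by auto
  then have "is_unit c"
    by (simp add: is_unit_iff_degree)
  then have "is_unit g"
    using c by (auto simp: is_unit_poly_iff)
  with assms(1) show False
    by (simp add: irreducible_def)
qed

lemma length_irreducible_factors_le_top_index:
  fixes f :: "'a::field poly poly"
  assumes f: "f = prod_list fs" "\<forall>g\<in>set fs. irreducible g"
    and a0: "coeff f 0 \<noteq> 0"
    and no_const_factor: "\<And>c. [:c:] dvd f \<Longrightarrow> degree c = 0"
  shows "length fs \<le> top_index (degree (coeff f 0)) f"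
    and "length fs \<le> top_index (degree (lead_coeff f)) (reflect_poly f)"
proof -
  have factors: "0 < degree g \<and> coeff g 0 \<noteq> 0 \<and> degree (coeff g 0) \<le> degree (coeff f 0)
      \<and> degree (lead_coeff g) \<le> degree (lead_coeff f)" if "g \<in> set fs" for g
  proof -
    have "g dvd f"
      using that f(1) by (simp add: prod_list_dvd)
    then have "coeff g 0 dvd coeff f 0" "lead_coeff g dvd lead_coeff f"
      by (simp_all add: dvd_imp_coeff_0_dvd dvd_imp_lead_coeff_dvd)
    moreover have "0 < degree g"
      using degree_pos_of_irreducible_dvd \<open>g dvd f\<close> that f(2) no_const_factor by blast
    moreover have "lead_coeff f \<noteq> 0"
      using a0 by auto
    ultimately show ?thesis
      using a0 by (auto simp: dvd_imp_degree_le)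
  qed
  show "length fs \<le> top_index (degree (coeff f 0)) f"
    using factors length_le_top_index_prod_list[of fs] f(1) by simp
  show "length fs \<le> top_index (degree (lead_coeff f)) (reflect_poly f)"
    using factors length_le_top_index_reflect_prod_list[of fs] f(1) by simp
qed

theorem theorem8:
  fixes f :: "'a::field poly poly" and n j :: nat
  assumes n_def: "n = degree f"
    and n2: "n \<ge> 2"
    and a0: "coeff f 0 \<noteq> 0"
    and an: "coeff f n \<noteq> 0"
    and no_const_factor: "\<And>g :: 'a poly. [:g:] dvd f \<Longrightarrow> degree g = 0"
    and j1: "1 \<le> j" and j2: "j \<le> n - 1"
    and left: "\<And>i. i < j \<Longrightarrow> coeff f i \<noteq> 0 \<Longrightarrow>
                 degree (coeff f j) > degree (coeff f i) + (j - i) * degree (coeff f n)"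
    and right: "\<And>i. j < i \<Longrightarrow> i \<le> n \<Longrightarrow> coeff f i \<noteq> 0 \<Longrightarrow>
                 degree (coeff f j) > degree (coeff f i) + (i - j) * degree (coeff f 0)"
  shows "(\<exists>fs :: 'a poly poly list. f = prod_list fs \<and> (\<forall>g\<in>set fs. irreducible g)
            \<and> length fs \<le> min j (n - j))
         \<and> ((j = 1 \<or> j = n - 1) \<longrightarrow> irreducible f)"
proof -
  have "f \<noteq> 0" "\<not> is_unit f"
    using a0 n2 n_def by (auto simp: is_unit_poly_iff)
  then obtain fs where fs: "f = prod_list fs" "\<forall>g\<in>set fs. irreducible g"
    using prod_list_irreducibles_exists_poly_poly by blast
  have aj: "coeff f j \<noteq> 0"
    using left[of 0] j1 a0 by auto
  have right': "degree (coeff f i) + (i - j) * degree (coeff f 0) < degree (coeff f j)"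
    if "j < i" "coeff f i \<noteq> 0" for i
    using right[OF that(1) _ that(2)] le_degree[OF that(2)] n_def by blast
  have "top_index (degree (coeff f 0)) f = j"
    by (rule top_index_eqI_dominant[OF aj]) (use left right' add_lessD1 in blast)+
  moreover have "top_index (degree (coeff f n)) (reflect_poly f) = n - j"
    unfolding n_def
    by (rule top_index_reflect_poly_eqI_dominant[OF aj]) (use left right' add_lessD1 n_def in blast)+
  ultimately have "length fs \<le> j" "length fs \<le> n - j"
    using length_irreducible_factors_le_top_index[OF fs a0 no_const_factor] n_def by simp_all
  moreover have "irreducible f" if "j = 1 \<or> j = n - 1"
  proof -
    have "fs \<noteq> []"
      using fs(1) \<open>\<not> is_unit f\<close> by auto
    with that \<open>length fs \<le> j\<close> \<open>length fs \<le> n - j\<close> obtain g where "fs = [g]"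
      by (cases fs) auto
    with fs show ?thesis
      by simp
  qed
  ultimately show ?thesis
    using fs by auto
qed

end
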